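(* Let $G$ be a group of homeomorphisms of a topological space $X$ acting effectively, such that the topology of pointwise convergence $\tau_p$ is an admissible group topology on $G$. If $(G,\tau_\partial)$ is Roelcke precompact, then $(G,\tau_p)$ is Roelcke precompact. If $(G,\tau_p)$ is not Roelcke precompact, then $G$ is not Roelcke precompact in any admissible group topology.
   Context: Admissible group topology: $G$ is a topological group and the action $G\times X\to X$ is continuous. $\tau_p$: subbase $\{f\in G\mid f(x)\in O\}$, $x\in X$, $O$ open. $\tau_\partial$ (permutation topology): group topology whose identity neighbourhood subbase is formed by point stabilizers $\mathrm{St}_x=\{g\in G\mid g(x)=x\}$. Roelcke precompact: the Roelcke uniformity (greatest lower bound of left and right uniformities) is totally bounded. *)

theory Defs
  imports "HOL-Analysis.Analysis"
begin

text \<open>Elements are maps 'a => 'a which are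
  homeomorphisms of X and equal to the identity outside the carrier of X (so that the
  group identity is id and the group operation is composition).\<close>

definition hinv :: "'a topology \<Rightarrow> ('a \<Rightarrow> 'a) \<Rightarrow> ('a \<Rightarrow> 'a)" where
  "hinv X g = (\<lambda>x. if x \<in> topspace X then inv_into (topspace X) g x else x)"

definition homeo_group :: "'a topology \<Rightarrow> ('a \<Rightarrow> 'a) set \<Rightarrow> bool" where
  "homeo_group X G \<longleftrightarrow>
     (\<forall>g\<in>G. homeomorphic_map X X g \<and> (\<forall>x. x \<notin> topspace X \<longrightarrow> g x = x)) \<and>
     id \<in> G \<and> (\<forall>f\<in>G. \<forall>g\<in>G. f \<circ> g \<in> G) \<and> (\<forall>g\<in>G. hinv X g \<in> G)"

definition acts_effectively :: "'a topology \<Rightarrow> ('a \<Rightarrow> 'a) set \<Rightarrow> bool" where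
  "acts_effectively X G \<longleftrightarrow> (\<forall>g\<in>G. (\<forall>x\<in>topspace X. g x = x) \<longrightarrow> g = id)"

definition group_topology ::
    "'a topology \<Rightarrow> ('a \<Rightarrow> 'a) set \<Rightarrow> ('a \<Rightarrow> 'a) topology \<Rightarrow> bool" where
  "group_topology X G T \<longleftrightarrow> topspace T = G \<and>
     continuous_map (prod_topology T T) T (\<lambda>(f, g). f \<circ> g) \<and>
     continuous_map T T (hinv X)"

definition admissible ::
    "'a topology \<Rightarrow> ('a \<Rightarrow> 'a) set \<Rightarrow> ('a \<Rightarrow> 'a) topology \<Rightarrow> bool" where
  "admissible X G T \<longleftrightarrow> group_topology X G T \<and>
     continuous_map (prod_topology T X) X (\<lambda>(g, x). g x)"

definition tau_p :: "'a topology \<Rightarrow> ('a \<Rightarrow> 'a) set \<Rightarrow> ('a \<Rightarrow> 'a) topology" where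
  "tau_p X G = subtopology
     (topology_generated_by {{f \<in> G. f x \<in> V} | x V. x \<in> topspace X \<and> openin X V}) G"

text \<open>Permutation topology: the group topology whose identity neighbourhood subbase
  consists of the point stabilizers; U is open iff every g in U has a translate
  g St_F inside U, St_F the pointwise stabilizer of a finite set F.\<close>
definition stab :: "'a topology \<Rightarrow> ('a \<Rightarrow> 'a) set \<Rightarrow> 'a set \<Rightarrow> ('a \<Rightarrow> 'a) set" where
  "stab X G F = {h \<in> G. \<forall>x\<in>F. h x = x}"

definition tau_partial :: "'a topology \<Rightarrow> ('a \<Rightarrow> 'a) set \<Rightarrow> ('a \<Rightarrow> 'a) topology" where
  "tau_partial X G = topology (\<lambda>U. U \<subseteq> G \<and>
     (\<forall>g\<in>U. \<exists>F. finite F \<and> F \<subseteq> topspace X \<and> (\<lambda>h. g \<circ> h) ` stab X G F \<subseteq> U))"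

text \<open>Roelcke uniformity: generated by the entourages {(g,h). h in U g U}, U an
  identity neighbourhood (it suffices to take open U containing the identity).\<close>
definition roelcke_entourage ::
    "('a \<Rightarrow> 'a) set \<Rightarrow> ('a \<Rightarrow> 'a) set \<Rightarrow> (('a \<Rightarrow> 'a) \<times> ('a \<Rightarrow> 'a)) set" where
  "roelcke_entourage G U = {(g, h). g \<in> G \<and> h \<in> G \<and>
     (\<exists>u\<in>U. \<exists>v\<in>U. h = u \<circ> g \<circ> v)}"

definition roelcke_precompact :: "('a \<Rightarrow> 'a) set \<Rightarrow> ('a \<Rightarrow> 'a) topology \<Rightarrow> bool" where
  "roelcke_precompact G T \<longleftrightarrow>
     (\<forall>U. openin T U \<and> id \<in> U \<longrightarrow>
        (\<exists>F. finite F \<and> F \<subseteq> G \<and> G \<subseteq> (\<Union>f\<in>F. roelcke_entourage G U `` {f})))"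

end

theory Submission
  imports Defs
begin

text \<open>An identity neighbourhood of a coarser topology is one of a finer topology, so Roelcke
  precompactness passes from finer to coarser topologies. Both \<open>\<tau>\<^sub>\<partial>\<close> and every
  admissible topology are finer than \<open>\<tau>\<^sub>p\<close>: continuity of the action makes each evaluation
  map \<open>g \<mapsto> g x\<close> continuous, and in \<open>\<tau>\<^sub>\<partial>\<close> the coset \<open>g St\<^sub>x\<close> keeps the value \<open>g x\<close> fixed.\<close>

lemma roelcke_precompact_coarser:
  assumes "roelcke_precompact G T"
    and "\<And>U. openin S U \<Longrightarrow> openin T U"
  shows "roelcke_precompact G S"
  using assms unfolding roelcke_precompact_def by blast

lemma openin_tau_p_coarsest:
  assumes "openin (tau_p X G) U"
    and "\<And>x V. x \<in> topspace X \<Longrightarrow> openin X V \<Longrightarrow> openin T {f \<in> G. f x \<in> V}"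
  shows "openin T U"
proof -
  let ?S = "{{f \<in> G. f x \<in> V} | x V. x \<in> topspace X \<and> openin X V}"
  obtain W where W: "generate_topology_on ?S W" "U = W \<inter> G"
    using assms(1) unfolding tau_p_def openin_subtopology openin_topology_generated_by_iff
    by blast
  have "istopology (\<lambda>W. openin T (W \<inter> G))"
    unfolding istopology_def
  proof (intro conjI allI impI)
    fix A B assume "openin T (A \<inter> G)" "openin T (B \<inter> G)"
    then have "openin T ((A \<inter> G) \<inter> (B \<inter> G))" by (rule openin_Int)
    moreover have "(A \<inter> G) \<inter> (B \<inter> G) = A \<inter> B \<inter> G" by blast
    ultimately show "openin T (A \<inter> B \<inter> G)" by simp
  next
    fix K assume "\<forall>A\<in>K. openin T (A \<inter> G)"
    then have "openin T (\<Union>A\<in>K. A \<inter> G)" by (intro openin_Union) blast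
    moreover have "(\<Union>A\<in>K. A \<inter> G) = \<Union>K \<inter> G" by blast
    ultimately show "openin T (\<Union>K \<inter> G)" by simp
  qed
  moreover have "openin T (A \<inter> G)" if "A \<in> ?S" for A
  proof -
    obtain x V where "x \<in> topspace X" "openin X V" "A = {f \<in> G. f x \<in> V}"
      using \<open>A \<in> ?S\<close> by blast
    then show ?thesis using assms(2) by (simp add: Int_absorb2)
  qed
  ultimately have "openin T (W \<inter> G)"
    using W(1) by (rule generate_topology_on_coarsest)
  then show ?thesis using W(2) by simp
qed

lemma openin_evaluation_preimage:
  assumes "continuous_map (prod_topology T X) X (\<lambda>(g, x). g x)"
    and "x \<in> topspace X" and "openin X V"
  shows "openin T {g \<in> topspace T. g x \<in> V}"
proof -
  have "continuous_map T (prod_topology T X) (\<lambda>g. (g, x))"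
    using assms(2) by (simp add: continuous_map_pairwise o_def)
  from continuous_map_compose[OF this assms(1)] have "continuous_map T X (\<lambda>g. g x)"
    by (simp add: o_def)
  then show ?thesis using assms(3) by (rule openin_continuous_map_preimage)
qed

lemma openin_tau_partial:
  "openin (tau_partial X G) U \<longleftrightarrow> U \<subseteq> G \<and>
     (\<forall>g\<in>U. \<exists>F. finite F \<and> F \<subseteq> topspace X \<and> (\<lambda>h. g \<circ> h) ` stab X G F \<subseteq> U)"
proof -
  have stab_union: "stab X G (F1 \<union> F2) \<subseteq> stab X G F1 \<inter> stab X G F2" for F1 F2
    unfolding stab_def by auto
  define P where "P = (\<lambda>U. U \<subseteq> G \<and>
     (\<forall>g\<in>U. \<exists>F. finite F \<and> F \<subseteq> topspace X \<and> (\<lambda>h. g \<circ> h) ` stab X G F \<subseteq> U))"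
  have P_Int: "P (A \<inter> B)" if "P A" "P B" for A B
    unfolding P_def
  proof (intro conjI ballI)
    show "A \<inter> B \<subseteq> G" using \<open>P A\<close> unfolding P_def by blast
    fix g assume g: "g \<in> A \<inter> B"
    obtain F1 where F1: "finite F1" "F1 \<subseteq> topspace X" "(\<lambda>h. g \<circ> h) ` stab X G F1 \<subseteq> A"
      using \<open>P A\<close> g unfolding P_def by blast
    obtain F2 where F2: "finite F2" "F2 \<subseteq> topspace X" "(\<lambda>h. g \<circ> h) ` stab X G F2 \<subseteq> B"
      using \<open>P B\<close> g unfolding P_def by blast
    have "(\<lambda>h. g \<circ> h) ` stab X G (F1 \<union> F2) \<subseteq> A \<inter> B"
      using F1(3) F2(3) stab_union by blast
    then show "\<exists>F. finite F \<and> F \<subseteq> topspace X \<and> (\<lambda>h. g \<circ> h) ` stab X G F \<subseteq> A \<inter> B"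
      using F1 F2 by (intro exI[of _ "F1 \<union> F2"]) auto
  qed
  have P_Union: "P (\<Union>K)" if "\<forall>A\<in>K. P A" for K
    unfolding P_def
  proof (intro conjI ballI)
    show "\<Union>K \<subseteq> G" using that unfolding P_def by blast
    fix g assume "g \<in> \<Union>K"
    then obtain A where "A \<in> K" "g \<in> A" by blast
    with that have "P A" by blast
    then obtain F where "finite F" "F \<subseteq> topspace X" "(\<lambda>h. g \<circ> h) ` stab X G F \<subseteq> A"
      using \<open>g \<in> A\<close> unfolding P_def by blast
    with \<open>A \<in> K\<close> show "\<exists>F. finite F \<and> F \<subseteq> topspace X \<and> (\<lambda>h. g \<circ> h) ` stab X G F \<subseteq> \<Union>K"
      by (intro exI[of _ F]) blast
  qed
  have "istopology P"
    unfolding istopology_def using P_Int P_Union by simp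
  then have "openin (tau_partial X G) = P"
    unfolding tau_partial_def P_def[symmetric] by (rule topology_inverse')
  then show ?thesis by (simp only: P_def)
qed

lemma openin_evaluation_tau_partial:
  assumes "\<And>f g. f \<in> G \<Longrightarrow> g \<in> G \<Longrightarrow> f \<circ> g \<in> G"
    and "x \<in> topspace X"
  shows "openin (tau_partial X G) {f \<in> G. f x \<in> V}"
  unfolding openin_tau_partial
proof (intro conjI ballI)
  fix g assume g: "g \<in> {f \<in> G. f x \<in> V}"
  then have "(\<lambda>h. g \<circ> h) ` stab X G {x} \<subseteq> {f \<in> G. f x \<in> V}"
    using assms(1) unfolding stab_def by auto
  then show "\<exists>F. finite F \<and> F \<subseteq> topspace X \<and> (\<lambda>h. g \<circ> h) ` stab X G F \<subseteq> {f \<in> G. f x \<in> V}"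
    using assms(2) by (intro exI[of _ "{x}"]) simp
qed blast

theorem corollary1p2:
  fixes X :: "'a topology" and G :: "('a \<Rightarrow> 'a) set"
  assumes "homeo_group X G"
    and "acts_effectively X G"
    and "admissible X G (tau_p X G)"
  shows "(roelcke_precompact G (tau_partial X G) \<longrightarrow> roelcke_precompact G (tau_p X G)) \<and>
         (\<not> roelcke_precompact G (tau_p X G) \<longrightarrow>
            (\<forall>T. admissible X G T \<longrightarrow> \<not> roelcke_precompact G T))"
proof (intro conjI impI allI notI)
  have comp: "\<And>f g. f \<in> G \<Longrightarrow> g \<in> G \<Longrightarrow> f \<circ> g \<in> G"
    using assms(1) unfolding homeo_group_def by blast
  assume "roelcke_precompact G (tau_partial X G)"
  moreover have "openin (tau_partial X G) U" if "openin (tau_p X G) U" for U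
    using that by (rule openin_tau_p_coarsest) (rule openin_evaluation_tau_partial[OF comp])
  ultimately show "roelcke_precompact G (tau_p X G)"
    by (rule roelcke_precompact_coarser)
next
  fix T
  assume "\<not> roelcke_precompact G (tau_p X G)" "admissible X G T" "roelcke_precompact G T"
  have "topspace T = G" and action: "continuous_map (prod_topology T X) X (\<lambda>(g, x). g x)"
    using \<open>admissible X G T\<close> unfolding admissible_def group_topology_def by auto
  have "openin T U" if "openin (tau_p X G) U" for U
    using that by (rule openin_tau_p_coarsest)
      (use openin_evaluation_preimage[OF action] \<open>topspace T = G\<close> in auto)
  with \<open>roelcke_precompact G T\<close> have "roelcke_precompact G (tau_p X G)"
    by (rule roelcke_precompact_coarser)
  with \<open>\<not> roelcke_precompact G (tau_p X G)\<close> show False ..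
qed

end
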